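(* Let $I=[-\tfrac12,\tfrac12]$, $\Sigma=I\times I$. If $(\mu_n)$ is a sequence of $K$-good measures on $\Sigma$ and $\nu_n=f\mu_n$, where $f:\Sigma\to\mathbb{R}$ is $\ell$-Lipschitz with $\|f\|_\infty\le\ell$, then each $\nu_n$ is a $(3\ell K+\ell)$-good measure.
   Context: $f\mu$ denotes the measure with density $f$ with respect to $\mu$. Vertical leaves are $\gamma=\{\gamma\}\times I$. For a measure $\mu$ on $\Sigma$ disintegrated along vertical leaves as $\mu(A)=\int_I\mu_\gamma(A\cap\gamma)\phi_x(\gamma)\,d\gamma$ (with $\mu_\gamma$ probability measures on the leaves and $\phi_x$ the density of the marginal on the $x$-axis), let $\mu|_\gamma=(\pi_y)_*(\phi_x(\gamma)\mu_\gamma)$, a finite measure on $I$ ($\pi_y(x,y)=y$). For finite measures on $I$, $W_1^0(\mu,\nu)=\sup\{|\int g\,d\mu-\int g\,d\nu|: g\ 1\text{-Lipschitz},\ \|g\|_\infty\le1\}$. For $G:I\to M(I)$ (finite measures on $I$), $\operatorname{Var}(G)=\sup\sum_iW_1^0(G(x_i),G(x_{i+1}))$ over finite increasing sequences in $I$. A measure $\mu$ on $\Sigma$ is $K$-good if $G_\mu(\gamma)=\mu|_\gamma$ is defined for every $\gamma\in I$ and $\operatorname{Var}(G_\mu)\le K$. *)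

theory Defs
  imports "HOL-Probability.Probability"
begin

definition I_int :: "real set" where
  "I_int = {-1/2..1/2}"

definition Sq :: "(real \<times> real) set" where
  "Sq = I_int \<times> I_int"

text \<open>A finite signed measure on I is represented by a pair (P, N) of finite
  measures on I, standing for P - N.  Integration of g against it:\<close>
definition sint :: "real measure \<times> real measure \<Rightarrow> (real \<Rightarrow> real) \<Rightarrow> real" where
  "sint m g = (\<integral>y. g y \<partial>(fst m)) - (\<integral>y. g y \<partial>(snd m))"

definition W10 :: "real measure \<times> real measure \<Rightarrow> real measure \<times> real measure \<Rightarrow> real" where
  "W10 m1 m2 = Sup {\<bar>sint m1 g - sint m2 g\<bar> | g.
                      1-lipschitz_on I_int g \<and> (\<forall>y\<in>I_int. \<bar>g y\<bar> \<le> 1)}"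

definition Var :: "(real \<Rightarrow> real measure \<times> real measure) \<Rightarrow> ereal" where
  "Var G = (SUP xs \<in> {xs. sorted_wrt (<) xs \<and> set xs \<subseteq> I_int}.
              ereal (\<Sum>i<length xs - 1. W10 (G (xs ! i)) (G (xs ! Suc i))))"

definition fin_meas_I :: "real measure \<Rightarrow> bool" where
  "fin_meas_I m \<longleftrightarrow> finite_measure m \<and> sets m = sets (restrict_space borel I_int)"

definition slice :: "(real \<times> real) set \<Rightarrow> real \<Rightarrow> real set" where
  "slice A \<gamma> = {y. (\<gamma>, y) \<in> A}"

definition restrictions :: "(real \<times> real) measure \<Rightarrow> (real \<Rightarrow> real measure) \<Rightarrow> bool" where
  "restrictions \<mu> G \<longleftrightarrow>
     (\<forall>\<gamma>\<in>I_int. fin_meas_I (G \<gamma>)) \<and>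
     (\<forall>A\<in>sets \<mu>.
        (\<lambda>\<gamma>. emeasure (G \<gamma>) (slice A \<gamma>)) \<in> borel_measurable (restrict_space lborel I_int) \<and>
        emeasure \<mu> A = (\<integral>\<^sup>+\<gamma>\<in>I_int. emeasure (G \<gamma>) (slice A \<gamma>) \<partial>lborel))"

definition K_good :: "real \<Rightarrow> (real \<times> real) measure \<Rightarrow> bool" where
  "K_good K \<mu> \<longleftrightarrow>
     (\<exists>G. restrictions \<mu> G \<and> Var (\<lambda>\<gamma>. (G \<gamma>, null_measure (G \<gamma>))) \<le> ereal K)"

definition restrictions_signed ::
  "((real \<times> real) set \<Rightarrow> real) \<Rightarrow> (real \<Rightarrow> real measure \<times> real measure) \<Rightarrow> bool" where
  "restrictions_signed \<nu> G \<longleftrightarrow>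
     (\<forall>\<gamma>\<in>I_int. fin_meas_I (fst (G \<gamma>)) \<and> fin_meas_I (snd (G \<gamma>))) \<and>
     (\<forall>A\<in>sets (restrict_space borel Sq).
        set_integrable lborel I_int
          (\<lambda>\<gamma>. measure (fst (G \<gamma>)) (slice A \<gamma>) - measure (snd (G \<gamma>)) (slice A \<gamma>)) \<and>
        \<nu> A = (LINT \<gamma>:I_int|lborel.
                 measure (fst (G \<gamma>)) (slice A \<gamma>) - measure (snd (G \<gamma>)) (slice A \<gamma>)))"

definition K_good_signed :: "real \<Rightarrow> ((real \<times> real) set \<Rightarrow> real) \<Rightarrow> bool" where
  "K_good_signed K \<nu> \<longleftrightarrow> (\<exists>G. restrictions_signed \<nu> G \<and> Var G \<le> ereal K)"

definition dens :: "(real \<times> real) measure \<Rightarrow> (real \<times> real \<Rightarrow> real) \<Rightarrow> (real \<times> real) set \<Rightarrow> real" where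
  "dens \<mu> f A = (LINT z:A|\<mu>. f z)"

end

theory Submission
  imports Defs
begin

(* Disintegrate mu as the integral over I of its restrictions mu|_gamma.  Then f mu disintegrates
   as the integral of f(gamma, -) mu|_gamma, represented by the densities of the positive and
   negative parts of f.  Testing it against a 1-Lipschitz g bounded by 1 means testing mu|_gamma
   against f(gamma, -) g, which is 2L-Lipschitz and bounded by L.  So moving from gamma to gamma'
   costs at most 2L W(mu|_gamma, mu|_gamma') for the change of measure, plus L |gamma - gamma'|
   times the mass of mu|_gamma' for the change of abscissa.  The masses vary by at most K and
   average to mu(Sigma) = 1 over I, so they are at most 1 + K.  Summing over a partition of I
   gives 2LK + L(1 + K) = 3LK + L. *)

abbreviation lborel_I :: "real measure" where
  "lborel_I \<equiv> restrict_space lborel I_int"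

abbreviation as_signed :: "real measure \<Rightarrow> real measure \<times> real measure" where
  "as_signed M \<equiv> (M, null_measure M)"

lemma I_int_in_sets_lborel: "I_int \<inter> space lborel \<in> sets lborel"
  by (simp add: I_int_def)

lemma space_lborel_I [simp]: "space lborel_I = I_int"
  by (simp add: space_restrict_space)

lemma prob_space_lborel_I: "prob_space lborel_I"
  using emeasure_restrict_space[OF I_int_in_sets_lborel, of I_int]
  by (intro prob_spaceI) (simp add: I_int_def)

lemma space_eq_if_sets_restrict_borel:
  "sets M = sets (restrict_space borel S) \<Longrightarrow> space M = S"
  by (metis sets_eq_imp_space_eq space_restrict_space space_borel inf_top.right_neutral)

lemma space_fin_meas_I: "fin_meas_I M \<Longrightarrow> space M = I_int"
  unfolding fin_meas_I_def using space_eq_if_sets_restrict_borel by blast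

lemma finite_measure_fin_meas_I: "fin_meas_I M \<Longrightarrow> finite_measure M"
  unfolding fin_meas_I_def by auto

lemma restrictions_fin_meas_I: "restrictions \<mu> G \<Longrightarrow> \<gamma> \<in> I_int \<Longrightarrow> fin_meas_I (G \<gamma>)"
  unfolding restrictions_def by auto

lemma borel_measurable_lipschitz_on:
  assumes "C-lipschitz_on S f" "sets M = sets (restrict_space borel S)"
  shows "f \<in> borel_measurable M"
  using borel_measurable_continuous_on_restrict[OF lipschitz_on_continuous_on[OF assms(1)]]
    measurable_cong_sets[OF assms(2) refl] by blast

lemma fin_meas_I_borel_measurable_lipschitz:
  "fin_meas_I M \<Longrightarrow> C-lipschitz_on I_int g \<Longrightarrow> g \<in> borel_measurable M"
  by (auto simp: fin_meas_I_def intro: borel_measurable_lipschitz_on)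

lemma measurable_vertical_embedding:
  assumes "fin_meas_I M" "\<gamma> \<in> I_int" "sets \<mu> = sets (restrict_space borel Sq)"
  shows "Pair \<gamma> \<in> measurable M \<mu>"
proof -
  have "Pair \<gamma> \<in> measurable (restrict_space borel I_int) (restrict_space borel Sq)"
    by (rule measurable_restrict_space3) (use assms(2) in \<open>auto simp: Sq_def\<close>)
  then show ?thesis
    using assms(1,3) unfolding fin_meas_I_def by (metis measurable_cong_sets)
qed

lemma measurable_vertical_section:
  assumes "h \<in> borel_measurable \<mu>" "fin_meas_I M" "\<gamma> \<in> I_int"
    "sets \<mu> = sets (restrict_space borel Sq)"
  shows "(\<lambda>y. h (\<gamma>, y)) \<in> borel_measurable M"
  using measurable_compose[OF measurable_vertical_embedding[OF assms(2-4)] assms(1)] .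

lemma slice_in_sets:
  assumes "A \<in> sets \<mu>" "fin_meas_I M" "\<gamma> \<in> I_int" "sets \<mu> = sets (restrict_space borel Sq)"
  shows "slice A \<gamma> \<in> sets M"
proof -
  have "A \<subseteq> Sq"
    using sets.sets_into_space[OF assms(1)] space_eq_if_sets_restrict_borel[OF assms(4)] by simp
  then have "slice A \<gamma> = Pair \<gamma> -` A \<inter> space M"
    using space_fin_meas_I[OF assms(2)] by (auto simp: slice_def Sq_def)
  then show ?thesis
    using measurable_sets[OF measurable_vertical_embedding[OF assms(2-4)] assms(1)] by simp
qed

section \<open>Disintegration along the vertical leaves\<close>

lemma lborel_I_cong:
  assumes "\<forall>\<gamma>\<in>I_int. F \<gamma> = F' \<gamma>"
  shows "F \<in> borel_measurable lborel_I \<longleftrightarrow> F' \<in> borel_measurable lborel_I"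
    and "(\<integral>\<^sup>+\<gamma>. F \<gamma> \<partial>lborel_I) = (\<integral>\<^sup>+\<gamma>. F' \<gamma> \<partial>lborel_I)"
  using assms measurable_cong[of lborel_I F F'] by (auto intro: nn_integral_cong)

lemma nn_integral_restrictions:
  assumes sets: "sets \<mu> = sets (restrict_space borel Sq)" and R: "restrictions \<mu> G"
    and h: "h \<in> borel_measurable \<mu>"
  shows "(\<lambda>\<gamma>. \<integral>\<^sup>+y. h (\<gamma>, y) \<partial>G \<gamma>) \<in> borel_measurable lborel_I \<and>
         (\<integral>\<^sup>+z. h z \<partial>\<mu>) = (\<integral>\<^sup>+\<gamma>. (\<integral>\<^sup>+y. h (\<gamma>, y) \<partial>G \<gamma>) \<partial>lborel_I)"
  using h
proof (induction rule: borel_measurable_induct)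
  note fin = restrictions_fin_meas_I[OF R]
  note vsection = measurable_vertical_section[OF _ fin _ sets]
  {
    case (cong f g)
    have e: "(\<integral>\<^sup>+y. f (\<gamma>, y) \<partial>G \<gamma>) = (\<integral>\<^sup>+y. g (\<gamma>, y) \<partial>G \<gamma>)" if "\<gamma> \<in> I_int" for \<gamma>
      using cong(3) that space_fin_meas_I[OF fin[OF that]] space_eq_if_sets_restrict_borel[OF sets]
      by (intro nn_integral_cong) (auto simp: Sq_def)
    moreover have "(\<integral>\<^sup>+z. f z \<partial>\<mu>) = (\<integral>\<^sup>+z. g z \<partial>\<mu>)"
      using cong(3) by (intro nn_integral_cong) auto
    ultimately show ?case
      using cong(4) lborel_I_cong[OF ballI[OF e]] by simp
  next
    case (set A)
    have e: "(\<integral>\<^sup>+y. indicator A (\<gamma>, y) \<partial>G \<gamma>) = emeasure (G \<gamma>) (slice A \<gamma>)"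
      if "\<gamma> \<in> I_int" for \<gamma>
    proof -
      have "indicator A (\<gamma>, y) = (indicator (slice A \<gamma>) y :: ennreal)" for y
        by (simp add: slice_def indicator_def)
      then show ?thesis
        using slice_in_sets[OF set fin[OF that] that sets] by simp
    qed
    have "emeasure \<mu> A = (\<integral>\<^sup>+\<gamma>. emeasure (G \<gamma>) (slice A \<gamma>) \<partial>lborel_I)"
      using R set unfolding restrictions_def
      by (simp add: nn_integral_restrict_space[OF I_int_in_sets_lborel] mult.commute)
    with R set show ?case
      unfolding restrictions_def using lborel_I_cong[OF ballI[OF e]] by simp
  next
    case (mult u c)
    have e: "\<forall>\<gamma>\<in>I_int. (\<integral>\<^sup>+y. c * u (\<gamma>, y) \<partial>G \<gamma>) = c * (\<integral>\<^sup>+y. u (\<gamma>, y) \<partial>G \<gamma>)"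
      using vsection[OF mult(2)] by (simp add: nn_integral_cmult)
    with mult show ?case
      unfolding lborel_I_cong[OF e] by (auto simp: nn_integral_cmult)
  next
    case (add u v)
    have e: "\<forall>\<gamma>\<in>I_int. (\<integral>\<^sup>+y. v (\<gamma>, y) + u (\<gamma>, y) \<partial>G \<gamma>)
                        = (\<integral>\<^sup>+y. v (\<gamma>, y) \<partial>G \<gamma>) + (\<integral>\<^sup>+y. u (\<gamma>, y) \<partial>G \<gamma>)"
      using add by (auto intro: nn_integral_add vsection)
    with add show ?case
      unfolding lborel_I_cong[OF e] by (auto simp: nn_integral_add)
  next
    case (seq U)
    have e: "\<forall>\<gamma>\<in>I_int. (\<integral>\<^sup>+y. (SUP i. U i) (\<gamma>, y) \<partial>G \<gamma>) = (SUP i. \<integral>\<^sup>+y. U i (\<gamma>, y) \<partial>G \<gamma>)"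
    proof
      fix \<gamma> assume "\<gamma> \<in> I_int"
      then show "(\<integral>\<^sup>+y. (SUP i. U i) (\<gamma>, y) \<partial>G \<gamma>) = (SUP i. \<integral>\<^sup>+y. U i (\<gamma>, y) \<partial>G \<gamma>)"
        using seq nn_integral_monotone_convergence_SUP[of "\<lambda>i y. U i (\<gamma>, y)" "G \<gamma>"]
        by (auto simp: image_comp incseq_def le_fun_def intro: vsection)
    qed
    have "incseq (\<lambda>i \<gamma>. \<integral>\<^sup>+y. U i (\<gamma>, y) \<partial>G \<gamma>)"
      using \<open>incseq U\<close> by (auto simp: incseq_def le_fun_def intro!: nn_integral_mono)
    with seq show ?case
      unfolding lborel_I_cong[OF e]
      by (auto simp: nn_integral_monotone_convergence_SUP image_comp intro!: borel_measurable_SUP)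
  }
qed

lemma nn_integral_fin_meas_I_bounded:
  assumes "fin_meas_I M" "\<forall>y\<in>I_int. h y \<le> c"
  shows "(\<integral>\<^sup>+y. ennreal (h y) \<partial>M) < \<infinity>"
proof -
  interpret finite_measure M by (rule finite_measure_fin_meas_I[OF assms(1)])
  have "(\<integral>\<^sup>+y. ennreal (h y) \<partial>M) \<le> (\<integral>\<^sup>+y. ennreal c \<partial>M)"
    using assms space_fin_meas_I[OF assms(1)] by (intro nn_integral_mono ennreal_leI) auto
  also have "\<dots> < \<infinity>"
    using emeasure_finite[of "space M"] by (simp add: ennreal_mult_eq_top_iff less_top[symmetric])
  finally show ?thesis .
qed

lemma integral_restrictions_nonneg:
  fixes h :: "real \<times> real \<Rightarrow> real"
  assumes sets: "sets \<mu> = sets (restrict_space borel Sq)" and R: "restrictions \<mu> G"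
    and "finite_measure \<mu>" and h: "h \<in> borel_measurable \<mu>" and bnd: "\<forall>z\<in>Sq. 0 \<le> h z \<and> h z \<le> c"
  shows "integrable lborel_I (\<lambda>\<gamma>. \<integral>y. h (\<gamma>, y) \<partial>G \<gamma>)"
    and "(\<integral>z. h z \<partial>\<mu>) = (\<integral>\<gamma>. (\<integral>y. h (\<gamma>, y) \<partial>G \<gamma>) \<partial>lborel_I)"
proof -
  interpret finite_measure \<mu> by fact
  define \<Phi> where "\<Phi> \<gamma> = (\<integral>\<^sup>+y. ennreal (h (\<gamma>, y)) \<partial>G \<gamma>)" for \<gamma>
  have disint: "\<Phi> \<in> borel_measurable lborel_I" "(\<integral>\<^sup>+z. ennreal (h z) \<partial>\<mu>) = (\<integral>\<^sup>+\<gamma>. \<Phi> \<gamma> \<partial>lborel_I)"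
    unfolding \<Phi>_def using nn_integral_restrictions[OF sets R, of "\<lambda>z. ennreal (h z)"] h by auto
  have inner: "(\<integral>y. h (\<gamma>, y) \<partial>G \<gamma>) = enn2real (\<Phi> \<gamma>)" "\<Phi> \<gamma> < \<infinity>" if "\<gamma> \<in> I_int" for \<gamma>
  proof -
    have fin: "fin_meas_I (G \<gamma>)" by (rule restrictions_fin_meas_I[OF R that])
    have "\<forall>y\<in>I_int. 0 \<le> h (\<gamma>, y) \<and> h (\<gamma>, y) \<le> c"
      using bnd that by (auto simp: Sq_def)
    then show "\<Phi> \<gamma> < \<infinity>"
      unfolding \<Phi>_def by (intro nn_integral_fin_meas_I_bounded[OF fin]) auto
    show "(\<integral>y. h (\<gamma>, y) \<partial>G \<gamma>) = enn2real (\<Phi> \<gamma>)"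
      unfolding \<Phi>_def using measurable_vertical_section[OF h fin that sets] space_fin_meas_I[OF fin]
        \<open>\<forall>y\<in>I_int. 0 \<le> h (\<gamma>, y) \<and> h (\<gamma>, y) \<le> c\<close>
      by (subst integral_eq_nn_integral) auto
  qed
  have "(\<integral>\<^sup>+z. ennreal (h z) \<partial>\<mu>) \<le> (\<integral>\<^sup>+z. ennreal c \<partial>\<mu>)"
    using bnd space_eq_if_sets_restrict_borel[OF sets] by (intro nn_integral_mono ennreal_leI) auto
  also have "\<dots> < \<infinity>"
    using emeasure_finite[of "space \<mu>"] by (simp add: ennreal_mult_eq_top_iff less_top[symmetric])
  moreover have real_\<Phi>: "(\<integral>\<^sup>+\<gamma>. ennreal (enn2real (\<Phi> \<gamma>)) \<partial>lborel_I) = (\<integral>\<^sup>+\<gamma>. \<Phi> \<gamma> \<partial>lborel_I)"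
    using inner(2) by (intro nn_integral_cong) auto
  ultimately have finite_integral: "(\<integral>\<^sup>+\<gamma>. ennreal (enn2real (\<Phi> \<gamma>)) \<partial>lborel_I) < \<infinity>"
    using disint(2) by simp
  have "integrable lborel_I (\<lambda>\<gamma>. enn2real (\<Phi> \<gamma>))"
    using disint(1) finite_integral by (intro integrableI_nonneg) auto
  then show "integrable lborel_I (\<lambda>\<gamma>. \<integral>y. h (\<gamma>, y) \<partial>G \<gamma>)"
    using inner(1) by (subst Bochner_Integration.integrable_cong[OF refl]) auto
  have "(\<integral>\<gamma>. (\<integral>y. h (\<gamma>, y) \<partial>G \<gamma>) \<partial>lborel_I) = (\<integral>\<gamma>. enn2real (\<Phi> \<gamma>) \<partial>lborel_I)"
    using inner(1) by (intro Bochner_Integration.integral_cong) auto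
  also have "\<dots> = enn2real (\<integral>\<^sup>+\<gamma>. \<Phi> \<gamma> \<partial>lborel_I)"
    using disint(1) real_\<Phi> by (simp add: integral_eq_nn_integral)
  also have "\<dots> = (\<integral>z. h z \<partial>\<mu>)"
    using disint(2) h bnd space_eq_if_sets_restrict_borel[OF sets]
    by (subst integral_eq_nn_integral) auto
  finally show "(\<integral>z. h z \<partial>\<mu>) = (\<integral>\<gamma>. (\<integral>y. h (\<gamma>, y) \<partial>G \<gamma>) \<partial>lborel_I)" ..
qed

lemma integrable_fin_meas_I_bounded:
  fixes g :: "real \<Rightarrow> real"
  assumes "fin_meas_I M" "g \<in> borel_measurable M" "\<forall>y\<in>I_int. \<bar>g y\<bar> \<le> c"
  shows "integrable M g"
proof -
  interpret finite_measure M by (rule finite_measure_fin_meas_I[OF assms(1)])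
  show ?thesis
    using assms space_fin_meas_I[OF assms(1)] by (intro integrable_const_bound[of _ c]) auto
qed

lemma abs_integral_fin_meas_I_le:
  fixes g :: "real \<Rightarrow> real"
  assumes "fin_meas_I M" "g \<in> borel_measurable M" "\<forall>y\<in>I_int. \<bar>g y\<bar> \<le> c"
  shows "\<bar>\<integral>y. g y \<partial>M\<bar> \<le> c * measure M I_int"
proof -
  interpret finite_measure M by (rule finite_measure_fin_meas_I[OF assms(1)])
  have "\<bar>\<integral>y. g y \<partial>M\<bar> \<le> (\<integral>y. c \<partial>M)"
    using assms space_fin_meas_I[OF assms(1)]
    by (intro integral_abs_bound_integral integrable_fin_meas_I_bounded) auto
  then show ?thesis
    using space_fin_meas_I[OF assms(1)] by (simp add: mult.commute)
qed

lemma integral_restrictions: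
  fixes h :: "real \<times> real \<Rightarrow> real"
  assumes sets: "sets \<mu> = sets (restrict_space borel Sq)" and R: "restrictions \<mu> G"
    and fin: "finite_measure \<mu>" and h: "h \<in> borel_measurable \<mu>" and bnd: "\<forall>z\<in>Sq. \<bar>h z\<bar> \<le> c"
  shows "integrable lborel_I (\<lambda>\<gamma>. \<integral>y. h (\<gamma>, y) \<partial>G \<gamma>)"
    and "(\<integral>z. h z \<partial>\<mu>) = (\<integral>\<gamma>. (\<integral>y. h (\<gamma>, y) \<partial>G \<gamma>) \<partial>lborel_I)"
proof -
  define p where "p z = max 0 (h z)" for z
  define n where "n z = max 0 (- h z)" for z
  have pn: "p \<in> borel_measurable \<mu>" "n \<in> borel_measurable \<mu>"
    "\<forall>z\<in>Sq. 0 \<le> p z \<and> p z \<le> c" "\<forall>z\<in>Sq. 0 \<le> n z \<and> n z \<le> c"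
    using h bnd unfolding p_def n_def by auto
  note P = integral_restrictions_nonneg[OF sets R fin pn(1) pn(3)]
  note N = integral_restrictions_nonneg[OF sets R fin pn(2) pn(4)]
  have inner: "(\<integral>y. h (\<gamma>, y) \<partial>G \<gamma>) = (\<integral>y. p (\<gamma>, y) \<partial>G \<gamma>) - (\<integral>y. n (\<gamma>, y) \<partial>G \<gamma>)"
    if "\<gamma> \<in> I_int" for \<gamma>
  proof -
    have fin_G: "fin_meas_I (G \<gamma>)" by (rule restrictions_fin_meas_I[OF R that])
    have "integrable (G \<gamma>) (\<lambda>y. p (\<gamma>, y))" "integrable (G \<gamma>) (\<lambda>y. n (\<gamma>, y))"
      using pn that measurable_vertical_section[OF _ fin_G that sets]
      by (auto intro!: integrable_fin_meas_I_bounded[OF fin_G, of _ c] simp: Sq_def)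
    then have "(\<integral>y. p (\<gamma>, y) \<partial>G \<gamma>) - (\<integral>y. n (\<gamma>, y) \<partial>G \<gamma>) = (\<integral>y. p (\<gamma>, y) - n (\<gamma>, y) \<partial>G \<gamma>)"
      by (rule Bochner_Integration.integral_diff[symmetric])
    also have "\<dots> = (\<integral>y. h (\<gamma>, y) \<partial>G \<gamma>)"
      by (intro Bochner_Integration.integral_cong) (auto simp: p_def n_def)
    finally show ?thesis ..
  qed
  show "integrable lborel_I (\<lambda>\<gamma>. \<integral>y. h (\<gamma>, y) \<partial>G \<gamma>)"
    using Bochner_Integration.integrable_diff[OF P(1) N(1)] inner
    by (subst Bochner_Integration.integrable_cong[OF refl]) auto
  have "integrable \<mu> p" "integrable \<mu> n"
    using pn space_eq_if_sets_restrict_borel[OF sets] fin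
    by (auto intro!: finite_measure.integrable_const_bound[of _ _ c])
  then have "(\<integral>z. p z \<partial>\<mu>) - (\<integral>z. n z \<partial>\<mu>) = (\<integral>z. p z - n z \<partial>\<mu>)"
    by (rule Bochner_Integration.integral_diff[symmetric])
  then have "(\<integral>z. h z \<partial>\<mu>) = (\<integral>z. p z \<partial>\<mu>) - (\<integral>z. n z \<partial>\<mu>)"
    by (auto simp: p_def n_def intro: Bochner_Integration.integral_cong)
  also have "\<dots> = (\<integral>\<gamma>. (\<integral>y. p (\<gamma>, y) \<partial>G \<gamma>) - (\<integral>y. n (\<gamma>, y) \<partial>G \<gamma>) \<partial>lborel_I)"
    using P N by simp
  also have "\<dots> = (\<integral>\<gamma>. (\<integral>y. h (\<gamma>, y) \<partial>G \<gamma>) \<partial>lborel_I)"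
    using inner by (intro Bochner_Integration.integral_cong) auto
  finally show "(\<integral>z. h z \<partial>\<mu>) = (\<integral>\<gamma>. (\<integral>y. h (\<gamma>, y) \<partial>G \<gamma>) \<partial>lborel_I)" .
qed


section \<open>Restrictions of a measure with bounded density\<close>

definition signed_density :: "'a measure \<Rightarrow> ('a \<Rightarrow> real) \<Rightarrow> 'a measure \<times> 'a measure" where
  "signed_density M q =
     (density M (\<lambda>y. ennreal (max 0 (q y))), density M (\<lambda>y. ennreal (max 0 (- q y))))"

lemma fin_meas_I_density:
  assumes "fin_meas_I M" "q \<in> borel_measurable M" "\<forall>y\<in>I_int. q y \<le> c"
  shows "fin_meas_I (density M (\<lambda>y. ennreal (q y)))"
proof -
  have "emeasure (density M (\<lambda>y. ennreal (q y))) (space M) = (\<integral>\<^sup>+y. ennreal (q y) \<partial>M)"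
    using assms(2) by (subst emeasure_density) (auto intro!: nn_integral_cong)
  also have "\<dots> < \<infinity>"
    by (rule nn_integral_fin_meas_I_bounded[OF assms(1,3)])
  finally show ?thesis
    using assms(1) unfolding fin_meas_I_def by (auto intro!: finite_measureI)
qed

lemma fin_meas_I_signed_density:
  assumes "fin_meas_I M" "q \<in> borel_measurable M" "\<forall>y\<in>I_int. \<bar>q y\<bar> \<le> c"
  shows "fin_meas_I (fst (signed_density M q))" "fin_meas_I (snd (signed_density M q))"
  unfolding signed_density_def using assms
  by (auto intro!: fin_meas_I_density[where c = c])

lemma sint_signed_density:
  assumes M: "fin_meas_I M" and q: "q \<in> borel_measurable M" "\<forall>y\<in>I_int. \<bar>q y\<bar> \<le> c"
    and g: "g \<in> borel_measurable M" "\<forall>y\<in>I_int. \<bar>g y\<bar> \<le> d"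
  shows "sint (signed_density M q) g = (\<integral>y. q y * g y \<partial>M)"
proof -
  have bound: "\<bar>max 0 (r y) * g y\<bar> \<le> c * d" if "\<forall>y\<in>I_int. \<bar>r y\<bar> \<le> c" "y \<in> I_int"
    for r :: "real \<Rightarrow> real" and y
    using that g(2) unfolding abs_mult by (intro mult_mono') auto
  have "integrable M (\<lambda>y. max 0 (q y) * g y)" "integrable M (\<lambda>y. max 0 (- q y) * g y)"
    using q g bound[of q] bound[of "\<lambda>y. - q y"]
    by (auto intro!: integrable_fin_meas_I_bounded[OF M, of _ "c * d"])
  then have "(\<integral>y. max 0 (q y) * g y \<partial>M) - (\<integral>y. max 0 (- q y) * g y \<partial>M)
      = (\<integral>y. max 0 (q y) * g y - max 0 (- q y) * g y \<partial>M)"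
    by (rule Bochner_Integration.integral_diff[symmetric])
  then have "sint (signed_density M q) g = (\<integral>y. max 0 (q y) * g y - max 0 (- q y) * g y \<partial>M)"
    unfolding sint_def signed_density_def fst_conv snd_conv using q g
    by (subst (1 2) integral_density) auto
  also have "\<dots> = (\<integral>y. q y * g y \<partial>M)"
    by (intro Bochner_Integration.integral_cong) (simp_all add: left_diff_distrib[symmetric] max_def)
  finally show ?thesis .
qed

lemma measure_signed_density_diff:
  assumes M: "fin_meas_I M" and q: "q \<in> borel_measurable M" "\<forall>y\<in>I_int. \<bar>q y\<bar> \<le> c"
    and B: "B \<in> sets M"
  shows "measure (fst (signed_density M q)) B - measure (snd (signed_density M q)) B
           = (\<integral>y. q y * indicator B y \<partial>M)"
proof -
  have "measure P B = (\<integral>y. indicator B y \<partial>P)" if "fin_meas_I P" "sets P = sets M" for P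
  proof -
    interpret finite_measure P by (rule finite_measure_fin_meas_I[OF that(1)])
    show ?thesis using B that(2) by simp
  qed
  then have "measure (fst (signed_density M q)) B - measure (snd (signed_density M q)) B
               = sint (signed_density M q) (indicator B)"
    unfolding sint_def using fin_meas_I_signed_density[OF M q] by (simp add: signed_density_def)
  also have "\<dots> = (\<integral>y. q y * indicator B y \<partial>M)"
    using B by (intro sint_signed_density[OF M q, of _ 1]) (auto simp: indicator_def)
  finally show ?thesis .
qed

lemma restrictions_signed_dens:
  assumes sets: "sets \<mu> = sets (restrict_space borel Sq)" and R: "restrictions \<mu> G"
    and fin: "finite_measure \<mu>" and f: "f \<in> borel_measurable \<mu>" and bnd: "\<forall>z\<in>Sq. \<bar>f z\<bar> \<le> c"
  shows "restrictions_signed (dens \<mu> f) (\<lambda>\<gamma>. signed_density (G \<gamma>) (\<lambda>y. f (\<gamma>, y)))"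
proof -
  have vertical: "(\<lambda>y. f (\<gamma>, y)) \<in> borel_measurable (G \<gamma>)" "\<forall>y\<in>I_int. \<bar>f (\<gamma>, y)\<bar> \<le> c"
    if "\<gamma> \<in> I_int" for \<gamma>
    using measurable_vertical_section[OF f restrictions_fin_meas_I[OF R that] that sets] bnd that
    by (auto simp: Sq_def)
  show ?thesis
    unfolding restrictions_signed_def
  proof (intro conjI ballI)
    fix \<gamma> assume "\<gamma> \<in> I_int"
    then show "fin_meas_I (fst (signed_density (G \<gamma>) (\<lambda>y. f (\<gamma>, y))))"
      and "fin_meas_I (snd (signed_density (G \<gamma>) (\<lambda>y. f (\<gamma>, y))))"
      using fin_meas_I_signed_density[OF restrictions_fin_meas_I[OF R] vertical] by auto
  next
    fix A assume "A \<in> sets (restrict_space borel Sq)"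
    then have A: "A \<in> sets \<mu>" using sets by simp
    define h where "h z = f z * indicator A z" for z
    have h: "h \<in> borel_measurable \<mu>" "\<forall>z\<in>Sq. \<bar>h z\<bar> \<le> c"
      using f A bnd unfolding h_def by (auto simp: indicator_def)
    let ?F = "\<lambda>\<gamma>. measure (fst (signed_density (G \<gamma>) (\<lambda>y. f (\<gamma>, y)))) (slice A \<gamma>)
                 - measure (snd (signed_density (G \<gamma>) (\<lambda>y. f (\<gamma>, y)))) (slice A \<gamma>)"
    have F: "?F \<gamma> = (\<integral>y. h (\<gamma>, y) \<partial>G \<gamma>)" if "\<gamma> \<in> I_int" for \<gamma>
      using measure_signed_density_diff[OF restrictions_fin_meas_I[OF R that] vertical[OF that]
          slice_in_sets[OF A restrictions_fin_meas_I[OF R that] that sets]]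
      by (simp add: h_def slice_def indicator_def)
    note disint = integral_restrictions[OF sets R fin h]
    have "integrable lborel_I ?F"
      using disint(1) F by (subst Bochner_Integration.integrable_cong[OF refl]) auto
    then show "set_integrable lborel I_int ?F"
      unfolding set_integrable_def by (simp add: integrable_restrict_space[OF I_int_in_sets_lborel])
    have "dens \<mu> f A = (\<integral>z. h z \<partial>\<mu>)"
      unfolding dens_def set_lebesgue_integral_def h_def by (simp add: mult.commute)
    also have "\<dots> = (\<integral>\<gamma>. ?F \<gamma> \<partial>lborel_I)"
      unfolding disint(2) using F by (intro Bochner_Integration.integral_cong) auto
    finally show "dens \<mu> f A = (LINT \<gamma>:I_int|lborel. ?F \<gamma>)"
      unfolding set_lebesgue_integral_def by (simp add: integral_restrict_space[OF I_int_in_sets_lborel])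
  qed
qed

section \<open>Variation of the restrictions\<close>

lemma W10_commute: "W10 m1 m2 = W10 m2 m1"
  unfolding W10_def by (simp add: abs_minus_commute)

lemma W10_least:
  assumes "\<And>g. 1-lipschitz_on I_int g \<Longrightarrow> \<forall>y\<in>I_int. \<bar>g y\<bar> \<le> 1 \<Longrightarrow> \<bar>sint m1 g - sint m2 g\<bar> \<le> B"
  shows "W10 m1 m2 \<le> B"
  unfolding W10_def
proof (rule cSup_least)
  have "1-lipschitz_on I_int (\<lambda>_. 0 :: real)"
    by (rule lipschitz_on_le[OF lipschitz_on_constant]) simp
  then show "{\<bar>sint m1 g - sint m2 g\<bar> |g. 1-lipschitz_on I_int g \<and> (\<forall>y\<in>I_int. \<bar>g y\<bar> \<le> 1)} \<noteq> {}"
    by fastforce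
qed (use assms in blast)

lemma abs_integral_diff_le_W10:
  assumes M: "fin_meas_I M" "fin_meas_I M'"
    and g: "1-lipschitz_on I_int g" "\<forall>y\<in>I_int. \<bar>g y\<bar> \<le> 1"
  shows "\<bar>(\<integral>y. g y \<partial>M) - (\<integral>y. g y \<partial>M')\<bar> \<le> W10 (as_signed M) (as_signed M')"
proof -
  let ?S = "{\<bar>sint (as_signed M) g - sint (as_signed M') g\<bar> |g.
              1-lipschitz_on I_int g \<and> (\<forall>y\<in>I_int. \<bar>g y\<bar> \<le> 1)}"
  have "bdd_above ?S"
  proof (rule bdd_aboveI)
    fix s assume "s \<in> ?S"
    then obtain g where g: "1-lipschitz_on I_int g" "\<forall>y\<in>I_int. \<bar>g y\<bar> \<le> 1"
      and "s = \<bar>(\<integral>y. g y \<partial>M) - (\<integral>y. g y \<partial>M')\<bar>"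
      by (auto simp: sint_def)
    then show "s \<le> 1 * measure M I_int + 1 * measure M' I_int"
      using abs_integral_fin_meas_I_le[OF M(1) fin_meas_I_borel_measurable_lipschitz[OF M(1) g(1)] g(2)]
        abs_integral_fin_meas_I_le[OF M(2) fin_meas_I_borel_measurable_lipschitz[OF M(2) g(1)] g(2)] by linarith
  qed
  moreover have "\<bar>(\<integral>y. g y \<partial>M) - (\<integral>y. g y \<partial>M')\<bar> \<in> ?S"
    using g by (force simp: sint_def)
  ultimately show ?thesis
    unfolding W10_def by (rule cSup_upper[rotated])
qed

lemma lipschitz_integral_diff_le_W10:
  assumes M: "fin_meas_I M" "fin_meas_I M'"
    and h: "c-lipschitz_on I_int h" "\<forall>y\<in>I_int. \<bar>h y\<bar> \<le> c"
  shows "\<bar>(\<integral>y. h y \<partial>M) - (\<integral>y. h y \<partial>M')\<bar> \<le> c * W10 (as_signed M) (as_signed M')"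
proof (cases "c = 0")
  case True
  then have "(\<integral>y. h y \<partial>N) = 0" if "fin_meas_I N" for N
    using h(2) space_fin_meas_I[OF that] by (intro integral_eq_zero_AE AE_I2) auto
  with True M show ?thesis by simp
next
  case False
  with lipschitz_on_nonneg[OF h(1)] have c: "c > 0" by simp
  have "(1 / c * c)-lipschitz_on I_int (\<lambda>y. 1 / c * h y)"
    using c by (intro lipschitz_on_cmult_real_nonneg h(1)) simp
  moreover have "\<forall>y\<in>I_int. \<bar>1 / c * h y\<bar> \<le> 1"
    using h(2) c by (simp add: abs_mult)
  ultimately have "\<bar>(\<integral>y. 1 / c * h y \<partial>M) - (\<integral>y. 1 / c * h y \<partial>M')\<bar> \<le> W10 (as_signed M) (as_signed M')"
    using c by (intro abs_integral_diff_le_W10[OF M]) simp_all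
  with c show ?thesis
    by (simp add: right_diff_distrib[symmetric] abs_mult field_simps)
qed

lemma sum_W10_le_Var:
  assumes "Var G \<le> ereal K" "sorted_wrt (<) xs" "set xs \<subseteq> I_int"
  shows "(\<Sum>i<length xs - 1. W10 (G (xs ! i)) (G (xs ! Suc i))) \<le> K"
  using assms unfolding Var_def by (auto simp: SUP_le_iff)

lemma Var_le_imp_nonneg: "Var G \<le> ereal K \<Longrightarrow> 0 \<le> K"
  using sum_W10_le_Var[of G K "[]"] by simp

lemma W10_le_Var:
  assumes "Var G \<le> ereal K" "a \<in> I_int" "b \<in> I_int" "a \<noteq> b"
  shows "W10 (G a) (G b) \<le> K"
  using assms(4) W10_commute
    sum_W10_le_Var[OF assms(1), of "[a, b]"] sum_W10_le_Var[OF assms(1), of "[b, a]"] assms(2,3)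
  by (cases a b rule: linorder_cases) auto

lemma measure_restrictions_diff_le:
  assumes R: "restrictions \<mu> G" and V: "Var (\<lambda>\<gamma>. as_signed (G \<gamma>)) \<le> ereal K"
    and "\<gamma> \<in> I_int" "\<gamma>' \<in> I_int"
  shows "measure (G \<gamma>) I_int \<le> measure (G \<gamma>') I_int + K"
proof (cases "\<gamma> = \<gamma>'")
  case True
  then show ?thesis using Var_le_imp_nonneg[OF V] by simp
next
  case False
  have M: "fin_meas_I (G \<gamma>)" "fin_meas_I (G \<gamma>')"
    using restrictions_fin_meas_I[OF R] assms(3,4) by auto
  have "\<bar>(\<integral>y. 1 \<partial>G \<gamma>) - (\<integral>y. 1 \<partial>G \<gamma>')\<bar> \<le> 1 * W10 (as_signed (G \<gamma>)) (as_signed (G \<gamma>'))"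
    by (rule lipschitz_integral_diff_le_W10[OF M lipschitz_on_le[OF lipschitz_on_constant]]) simp_all
  also have "\<dots> \<le> K"
    using W10_le_Var[OF V assms(3,4) False] by simp
  finally show ?thesis
    using space_fin_meas_I[OF M(1)] space_fin_meas_I[OF M(2)] by simp
qed

lemma measure_restrictions_le:
  assumes sets: "sets \<mu> = sets (restrict_space borel Sq)" and R: "restrictions \<mu> G"
    and P: "prob_space \<mu>" and V: "Var (\<lambda>\<gamma>. as_signed (G \<gamma>)) \<le> ereal K" and "\<gamma> \<in> I_int"
  shows "measure (G \<gamma>) I_int \<le> 1 + K"
proof -
  interpret lborel_I: prob_space lborel_I by (rule prob_space_lborel_I)
  have mass: "(\<integral>y. 1 \<partial>G \<gamma>') = measure (G \<gamma>') I_int" if "\<gamma>' \<in> I_int" for \<gamma>'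
    using space_fin_meas_I[OF restrictions_fin_meas_I[OF R that]] by simp
  note disint = integral_restrictions[OF sets R prob_space.finite_measure[OF P], of "\<lambda>_. 1" 1]
  have "measure (G \<gamma>) I_int - K = (\<integral>\<gamma>'. measure (G \<gamma>) I_int - K \<partial>lborel_I)"
    using lborel_I.prob_space by simp
  also have "\<dots> \<le> (\<integral>\<gamma>'. (\<integral>y. 1 \<partial>G \<gamma>') \<partial>lborel_I)"
    using disint(1) mass measure_restrictions_diff_le[OF R V assms(5)]
    by (intro integral_mono) (auto simp: add.commute diff_le_eq)
  also have "\<dots> = 1"
    using disint(2) prob_space.prob_space[OF P] by simp
  finally show ?thesis by simp
qed

lemma lipschitz_on_mult_real:
  fixes f g :: "'a::metric_space \<Rightarrow> real"
  assumes f: "C-lipschitz_on U f" "\<forall>x\<in>U. \<bar>f x\<bar> \<le> A"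
    and g: "D-lipschitz_on U g" "\<forall>x\<in>U. \<bar>g x\<bar> \<le> B"
    and "0 \<le> A" "0 \<le> B"
  shows "(A * D + B * C)-lipschitz_on U (\<lambda>x. f x * g x)"
proof (rule lipschitz_onI)
  show "0 \<le> A * D + B * C"
    using assms lipschitz_on_nonneg[OF f(1)] lipschitz_on_nonneg[OF g(1)] by simp
  fix x y assume xy: "x \<in> U" "y \<in> U"
  have "f x * g x - f y * g y = f x * (g x - g y) + g y * (f x - f y)"
    by (simp add: algebra_simps)
  then have "\<bar>f x * g x - f y * g y\<bar> \<le> \<bar>f x\<bar> * \<bar>g x - g y\<bar> + \<bar>g y\<bar> * \<bar>f x - f y\<bar>"
    by (metis abs_mult abs_triangle_ineq)
  also have "\<dots> \<le> A * (D * dist x y) + B * (C * dist x y)"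
    using xy f g lipschitz_onD[OF f(1) xy] lipschitz_onD[OF g(1) xy] \<open>0 \<le> A\<close> \<open>0 \<le> B\<close>
    by (intro add_mono mult_mono) (auto simp: dist_real_def)
  finally show "dist (f x * g x) (f y * g y) \<le> (A * D + B * C) * dist x y"
    by (simp add: dist_real_def algebra_simps)
qed

lemma lipschitz_on_vertical_section:
  assumes "L-lipschitz_on Sq f" "\<gamma> \<in> I_int"
  shows "L-lipschitz_on I_int (\<lambda>y. f (\<gamma>, y))"
proof (rule lipschitz_onI)
  fix x y assume "x \<in> I_int" "y \<in> I_int"
  then have "dist (f (\<gamma>, x)) (f (\<gamma>, y)) \<le> L * dist (\<gamma>, x) (\<gamma>, y)"
    using assms by (intro lipschitz_onD[OF assms(1)]) (auto simp: Sq_def)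
  then show "dist (f (\<gamma>, x)) (f (\<gamma>, y)) \<le> L * dist x y"
    by (simp add: dist_Pair_Pair)
qed (rule lipschitz_on_nonneg[OF assms(1)])

lemma lipschitz_on_horizontal:
  assumes "L-lipschitz_on Sq f" "\<gamma> \<in> I_int" "\<gamma>' \<in> I_int" "y \<in> I_int"
  shows "\<bar>f (\<gamma>, y) - f (\<gamma>', y)\<bar> \<le> L * \<bar>\<gamma> - \<gamma>'\<bar>"
proof -
  have "dist (f (\<gamma>, y)) (f (\<gamma>', y)) \<le> L * dist (\<gamma>, y) (\<gamma>', y)"
    using assms by (intro lipschitz_onD[OF assms(1)]) (auto simp: Sq_def)
  then show ?thesis
    by (simp add: dist_Pair_Pair dist_real_def)
qed

lemma abs_integral_horizontal_diff_le:
  assumes M: "fin_meas_I M" and f: "L-lipschitz_on Sq f" "\<forall>z\<in>Sq. \<bar>f z\<bar> \<le> c"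
    and "\<gamma> \<in> I_int" "\<gamma>' \<in> I_int"
    and g: "1-lipschitz_on I_int g" "\<forall>y\<in>I_int. \<bar>g y\<bar> \<le> 1"
  shows "\<bar>(\<integral>y. f (\<gamma>, y) * g y \<partial>M) - (\<integral>y. f (\<gamma>', y) * g y \<partial>M)\<bar>
           \<le> L * \<bar>\<gamma> - \<gamma>'\<bar> * measure M I_int"
proof -
  have meas: "(\<lambda>y. f (a, y) * g y) \<in> borel_measurable M" if "a \<in> I_int" for a
    using fin_meas_I_borel_measurable_lipschitz[OF M] lipschitz_on_vertical_section[OF f(1) that] g(1)
    by measurable
  have bnd: "\<forall>y\<in>I_int. \<bar>f (\<gamma>, y) * g y - f (\<gamma>', y) * g y\<bar> \<le> L * \<bar>\<gamma> - \<gamma>'\<bar>"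
  proof
    fix y assume y: "y \<in> I_int"
    have "\<bar>f (\<gamma>, y) * g y - f (\<gamma>', y) * g y\<bar> = \<bar>f (\<gamma>, y) - f (\<gamma>', y)\<bar> * \<bar>g y\<bar>"
      by (simp add: abs_mult[symmetric] left_diff_distrib)
    also have "\<dots> \<le> L * \<bar>\<gamma> - \<gamma>'\<bar> * 1"
      using lipschitz_on_horizontal[OF f(1) assms(4,5) y] g(2) y by (intro mult_mono) auto
    finally show "\<bar>f (\<gamma>, y) * g y - f (\<gamma>', y) * g y\<bar> \<le> L * \<bar>\<gamma> - \<gamma>'\<bar>" by simp
  qed
  have "integrable M (\<lambda>y. f (a, y) * g y)" if "a \<in> I_int" for a
  proof (rule integrable_fin_meas_I_bounded[OF M meas[OF that]], rule ballI)
    fix y assume "y \<in> I_int"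
    then have "\<bar>f (a, y)\<bar> \<le> c" "\<bar>g y\<bar> \<le> 1"
      using f(2) g(2) that by (auto simp: Sq_def)
    then show "\<bar>f (a, y) * g y\<bar> \<le> c * 1"
      unfolding abs_mult by (intro mult_mono') auto
  qed
  then have "(\<integral>y. f (\<gamma>, y) * g y \<partial>M) - (\<integral>y. f (\<gamma>', y) * g y \<partial>M)
               = (\<integral>y. f (\<gamma>, y) * g y - f (\<gamma>', y) * g y \<partial>M)"
    using assms(4,5) by (intro Bochner_Integration.integral_diff[symmetric])
  also have "\<bar>\<dots>\<bar> \<le> L * \<bar>\<gamma> - \<gamma>'\<bar> * measure M I_int"
    using meas assms(4,5) by (intro abs_integral_fin_meas_I_le[OF M _ bnd]) auto
  finally show ?thesis .
qed

lemma W10_signed_density_restrictions_le: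
  assumes sets: "sets \<mu> = sets (restrict_space borel Sq)" and R: "restrictions \<mu> G"
    and P: "prob_space \<mu>" and V: "Var (\<lambda>\<gamma>. as_signed (G \<gamma>)) \<le> ereal K"
    and f: "L-lipschitz_on Sq f" "\<forall>z\<in>Sq. \<bar>f z\<bar> \<le> L"
    and \<gamma>: "\<gamma> \<in> I_int" "\<gamma>' \<in> I_int"
  shows "W10 (signed_density (G \<gamma>) (\<lambda>y. f (\<gamma>, y))) (signed_density (G \<gamma>') (\<lambda>y. f (\<gamma>', y)))
           \<le> 2 * L * W10 (as_signed (G \<gamma>)) (as_signed (G \<gamma>')) + L * \<bar>\<gamma> - \<gamma>'\<bar> * (1 + K)"
proof (rule W10_least)
  fix g :: "real \<Rightarrow> real" assume g: "1-lipschitz_on I_int g" "\<forall>y\<in>I_int. \<bar>g y\<bar> \<le> 1"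
  have M: "fin_meas_I (G \<gamma>)" "fin_meas_I (G \<gamma>')"
    using restrictions_fin_meas_I[OF R] \<gamma> by auto
  have L: "0 \<le> L" by (rule lipschitz_on_nonneg[OF f(1)])
  have f_section: "L-lipschitz_on I_int (\<lambda>y. f (a, y))" "\<forall>y\<in>I_int. \<bar>f (a, y)\<bar> \<le> L"
    if "a \<in> I_int" for a
    using lipschitz_on_vertical_section[OF f(1) that] f(2) that by (auto simp: Sq_def)
  have sint: "sint (signed_density N (\<lambda>y. f (a, y))) g = (\<integral>y. f (a, y) * g y \<partial>N)"
    if "fin_meas_I N" "a \<in> I_int" for N a
    using f_section[OF that(2)] g
    by (intro sint_signed_density[OF that(1)] fin_meas_I_borel_measurable_lipschitz[OF that(1)])
  have "(L * 1 + 1 * L)-lipschitz_on I_int (\<lambda>y. f (\<gamma>, y) * g y)"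
    using f_section[OF \<gamma>(1)] g L by (intro lipschitz_on_mult_real) auto
  moreover have "\<forall>y\<in>I_int. \<bar>f (\<gamma>, y) * g y\<bar> \<le> 2 * L"
    using f_section[OF \<gamma>(1)] g L unfolding abs_mult
    by (auto intro: order_trans[OF mult_mono'[of _ L _ 1]])
  ultimately have "\<bar>(\<integral>y. f (\<gamma>, y) * g y \<partial>G \<gamma>) - (\<integral>y. f (\<gamma>, y) * g y \<partial>G \<gamma>')\<bar>
                     \<le> 2 * L * W10 (as_signed (G \<gamma>)) (as_signed (G \<gamma>'))"
    by (intro lipschitz_integral_diff_le_W10[OF M]) simp_all
  moreover have "\<bar>(\<integral>y. f (\<gamma>, y) * g y \<partial>G \<gamma>') - (\<integral>y. f (\<gamma>', y) * g y \<partial>G \<gamma>')\<bar>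
                   \<le> L * \<bar>\<gamma> - \<gamma>'\<bar> * (1 + K)"
    using abs_integral_horizontal_diff_le[OF M(2) f \<gamma> g]
      measure_restrictions_le[OF sets R P V \<gamma>(2)] L
    by (meson abs_ge_zero mult_left_mono mult_nonneg_nonneg order_trans)
  ultimately show "\<bar>sint (signed_density (G \<gamma>) (\<lambda>y. f (\<gamma>, y))) g
                    - sint (signed_density (G \<gamma>') (\<lambda>y. f (\<gamma>', y))) g\<bar>
                   \<le> 2 * L * W10 (as_signed (G \<gamma>)) (as_signed (G \<gamma>')) + L * \<bar>\<gamma> - \<gamma>'\<bar> * (1 + K)"
    unfolding sint[OF M(1) \<gamma>(1)] sint[OF M(2) \<gamma>(2)] by linarith
qed

lemma Var_signed_density_restrictions_le:
  assumes sets: "sets \<mu> = sets (restrict_space borel Sq)" and R: "restrictions \<mu> G"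
    and P: "prob_space \<mu>" and V: "Var (\<lambda>\<gamma>. as_signed (G \<gamma>)) \<le> ereal K"
    and f: "L-lipschitz_on Sq f" "\<forall>z\<in>Sq. \<bar>f z\<bar> \<le> L"
  shows "Var (\<lambda>\<gamma>. signed_density (G \<gamma>) (\<lambda>y. f (\<gamma>, y))) \<le> ereal (3 * L * K + L)"
  unfolding Var_def
proof (rule SUP_least, safe)
  fix xs :: "real list" assume xs: "sorted_wrt (<) xs" "set xs \<subseteq> I_int"
  define m where "m = length xs - 1"
  let ?W = "\<lambda>i. W10 (as_signed (G (xs ! i))) (as_signed (G (xs ! Suc i)))"
  let ?W' = "\<lambda>i. W10 (signed_density (G (xs ! i)) (\<lambda>y. f (xs ! i, y)))
                     (signed_density (G (xs ! Suc i)) (\<lambda>y. f (xs ! Suc i, y)))"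
  have L: "0 \<le> L" by (rule lipschitz_on_nonneg[OF f(1)])
  have K: "0 \<le> K" by (rule Var_le_imp_nonneg[OF V])
  have "(\<Sum>i<m. ?W' i) \<le> (\<Sum>i<m. 2 * L * ?W i + L * (1 + K) * (xs ! Suc i - xs ! i))"
  proof (rule sum_mono)
    fix i assume "i \<in> {..<m}"
    then have i: "i < length xs" "Suc i < length xs" by (auto simp: m_def)
    then have "xs ! i < xs ! Suc i" using sorted_wrt_nth_less[OF xs(1)] by simp
    moreover have "xs ! i \<in> I_int" "xs ! Suc i \<in> I_int"
      using xs(2) i by auto
    ultimately show "?W' i \<le> 2 * L * ?W i + L * (1 + K) * (xs ! Suc i - xs ! i)"
      using W10_signed_density_restrictions_le[OF sets R P V f, of "xs ! i" "xs ! Suc i"]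
      by (simp add: algebra_simps)
  qed
  also have "\<dots> = 2 * L * (\<Sum>i<m. ?W i) + L * (1 + K) * (xs ! m - xs ! 0)"
    by (simp add: sum.distrib sum_distrib_left[symmetric] sum_lessThan_telescope)
  also have "\<dots> \<le> 2 * L * K + L * (1 + K) * 1"
  proof (intro add_mono mult_left_mono)
    show "(\<Sum>i<m. ?W i) \<le> K"
      using sum_W10_le_Var[OF V xs] by (simp add: m_def)
    show "xs ! m - xs ! 0 \<le> 1"
    proof (cases "xs = []")
      case False
      then have "xs ! m \<in> I_int" "xs ! 0 \<in> I_int"
        using xs(2) by (auto simp: m_def)
      then show ?thesis by (auto simp: I_int_def)
    qed (simp add: m_def)
  qed (use L K in auto)
  finally show "ereal (\<Sum>i<length xs - 1. ?W' i) \<le> ereal (3 * L * K + L)"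
    by (simp add: m_def algebra_simps)
qed

theorem lemma8p11:
  fixes \<mu> :: "nat \<Rightarrow> (real \<times> real) measure"
    and f :: "real \<times> real \<Rightarrow> real"
    and K L :: real
  assumes "\<And>n. prob_space (\<mu> n)"
    and "\<And>n. sets (\<mu> n) = sets (restrict_space borel Sq)"
    and "\<And>n. K_good K (\<mu> n)"
    and "L-lipschitz_on Sq f"
    and "\<forall>z\<in>Sq. \<bar>f z\<bar> \<le> L"
  shows "\<forall>n. K_good_signed (3 * L * K + L) (dens (\<mu> n) f)"
proof
  fix n
  obtain G where R: "restrictions (\<mu> n) G" and V: "Var (\<lambda>\<gamma>. as_signed (G \<gamma>)) \<le> ereal K"
    using assms(3) unfolding K_good_def by blast
  have "f \<in> borel_measurable (\<mu> n)"
    by (rule borel_measurable_lipschitz_on[OF assms(4,2)])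
  then have "restrictions_signed (dens (\<mu> n) f) (\<lambda>\<gamma>. signed_density (G \<gamma>) (\<lambda>y. f (\<gamma>, y)))"
    using assms(1,2,5) R by (intro restrictions_signed_dens prob_space.finite_measure)
  with Var_signed_density_restrictions_le[OF assms(2) R assms(1) V assms(4,5)]
  show "K_good_signed (3 * L * K + L) (dens (\<mu> n) f)"
    unfolding K_good_signed_def by blast
qed

end
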